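(* Let $\mathbf{f}:\mathbb{R}^D\times[0,1]\to\mathbb{R}^D$ and $g:[0,1]\to\mathbb{R}$ be sufficiently regular. Let $q_t$ and $p_t$, $t\in[0,1]$, be positive smooth probability densities on $\mathbb{R}^D$, each solving the Fokker–Planck equation $$\partial_t u=\nabla\cdot\Big(\big(\tfrac12 g(t)^2\nabla\log u-\mathbf{f}(\cdot,t)\big)u\Big)$$ of the SDE $\mathrm{d}\mathbf{z}=\mathbf{f}(\mathbf{z},t)\mathrm{d}t+g(t)\mathrm{d}\mathbf{w}$. Assume enough decay and regularity that differentiation under the integral sign and integration by parts with vanishing boundary terms are valid; for instance, $\log q_t,\log p_t$ smooth with at most polynomial growth at infinity suffices. Assume $q_1=p_1$. Then $$-\int q_0\log p_0\,d\mathbf{z}=\mathcal{H}(q_1)+\int_0^1\mathbb{E}_{\mathbf{z}\sim q_t}\Big[\tfrac12 g(t)^2\|\nabla\log p_t(\mathbf{z})\|_2^2+\mathbf{f}(\mathbf{z},t)^\top\nabla\log q_t(\mathbf{z})-g(t)^2\,\nabla\log q_t(\mathbf{z})^\top\nabla\log p_t(\mathbf{z})\Big]dt,$$ where $\mathcal{H}(q_1)=-\int q_1\log q_1$ is the differential entropy. *)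

theory Defs
  imports "HOL-Analysis.Analysis"
begin

definition partial :: "('a::euclidean_space \<Rightarrow> real) \<Rightarrow> 'a \<Rightarrow> 'a \<Rightarrow> real" where
  "partial \<phi> i x = frechet_derivative \<phi> (at x) i"

definition grad :: "('a::euclidean_space \<Rightarrow> real) \<Rightarrow> 'a \<Rightarrow> 'a" where
  "grad \<phi> x = (\<Sum>i\<in>Basis. partial \<phi> i x *\<^sub>R i)"

definition divg :: "('a::euclidean_space \<Rightarrow> 'a) \<Rightarrow> 'a \<Rightarrow> real" where
  "divg V x = (\<Sum>i\<in>Basis. partial (\<lambda>y. V y \<bullet> i) i x)"

definition fp_flux :: "(real \<Rightarrow> real) \<Rightarrow> ('a::euclidean_space \<Rightarrow> real \<Rightarrow> 'a)
    \<Rightarrow> ('a \<Rightarrow> real \<Rightarrow> real) \<Rightarrow> 'a \<Rightarrow> real \<Rightarrow> 'a" where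
  "fp_flux g f u z t = u z t *\<^sub>R (((g t)^2 / 2) *\<^sub>R grad (\<lambda>y. ln (u y t)) z - f z t)"

definition diff_entropy :: "('a::euclidean_space \<Rightarrow> real) \<Rightarrow> real" where
  "diff_entropy \<phi> = - (\<integral>z. \<phi> z * ln (\<phi> z) \<partial>lborel)"

definition expect_dens :: "('a::euclidean_space \<Rightarrow> real) \<Rightarrow> ('a \<Rightarrow> real) \<Rightarrow> real" where
  "expect_dens \<phi> h = (\<integral>z. \<phi> z * h z \<partial>lborel)"

end

(*
  Differentiate the cross-entropy t \<mapsto> \<integral> q_t log p_t under the integral sign. By the
  Fokker-Planck equations its derivative is \<integral> (div J_q) log p_t + (q_t / p_t) div J_p, where
  J_u = u ((g\<^sup>2/2) \<nabla>log u - f) is the probability flux of u. Integrating by parts,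
  \<integral> \<phi> div J = - \<integral> J \<bullet> \<nabla>\<phi>, and using \<nabla>(q/p) = (q/p)(\<nabla>log q - \<nabla>log p), the derivative becomes
  the expectation under q_t in the claim. Integrating over [0,1] and using q_1 = p_1 to identify
  \<integral> q_1 log p_1 with -H(q_1) gives the identity.
*)

theory Submission
  imports Defs
begin

lemma partial_eqI:
  assumes "(\<phi> has_derivative \<phi>') (at x)"
  shows "partial \<phi> i x = \<phi>' i"
  using assms by (simp add: partial_def frechet_derivative_at[symmetric])

lemma has_derivative_frechet_derivative:
  assumes "\<phi> differentiable (at x)"
  shows "(\<phi> has_derivative (\<lambda>h. frechet_derivative \<phi> (at x) h)) (at x)"
  using frechet_derivative_works[THEN iffD1, OF assms] by (simp add: eta_contract_eq)

lemma partial_mult: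
  fixes \<phi> \<psi> :: "'a::euclidean_space \<Rightarrow> real"
  assumes "\<phi> differentiable (at x)" "\<psi> differentiable (at x)"
  shows "partial (\<lambda>z. \<phi> z * \<psi> z) i x = partial \<phi> i x * \<psi> x + \<phi> x * partial \<psi> i x"
  using partial_eqI[OF has_derivative_mult[OF has_derivative_frechet_derivative[OF assms(1)]
      has_derivative_frechet_derivative[OF assms(2)]]]
  by (simp add: partial_def algebra_simps)

lemma partial_ln:
  fixes \<phi> :: "'a::euclidean_space \<Rightarrow> real"
  assumes "\<phi> differentiable (at x)" "\<phi> x > 0"
  shows "partial (\<lambda>z. ln (\<phi> z)) i x = partial \<phi> i x / \<phi> x"
  using partial_eqI[OF has_derivative_ln[OF assms(2) has_derivative_frechet_derivative[OF assms(1)]]]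
  by (simp add: partial_def divide_inverse)

lemma partial_divide:
  fixes \<phi> \<psi> :: "'a::euclidean_space \<Rightarrow> real"
  assumes "\<phi> differentiable (at x)" "\<psi> differentiable (at x)" "\<psi> x \<noteq> 0"
  shows "partial (\<lambda>z. \<phi> z / \<psi> z) i x
           = (partial \<phi> i x * \<psi> x - \<phi> x * partial \<psi> i x) / (\<psi> x)\<^sup>2"
  using partial_eqI[OF has_derivative_divide'[OF has_derivative_frechet_derivative[OF assms(1)]
      has_derivative_frechet_derivative[OF assms(2)] assms(3)]]
  by (simp add: partial_def power2_eq_square)

lemma inner_grad_Basis:
  fixes \<phi> :: "'a::euclidean_space \<Rightarrow> real"
  assumes "i \<in> Basis"
  shows "grad \<phi> x \<bullet> i = partial \<phi> i x"
  using assms by (simp add: grad_def inner_sum_left inner_Basis if_distrib cong: if_cong)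

lemma inner_grad:
  fixes \<phi> :: "'a::euclidean_space \<Rightarrow> real"
  shows "v \<bullet> grad \<phi> x = (\<Sum>i\<in>Basis. (v \<bullet> i) * partial \<phi> i x)"
  unfolding euclidean_inner[of v "grad \<phi> x"] by (rule sum.cong) (simp_all add: inner_grad_Basis)

lemma grad_divide:
  fixes \<phi> \<psi> :: "'a::euclidean_space \<Rightarrow> real"
  assumes "\<phi> differentiable (at x)" "\<psi> differentiable (at x)" "\<phi> x > 0" "\<psi> x > 0"
  shows "grad (\<lambda>z. \<phi> z / \<psi> z) x
           = (\<phi> x / \<psi> x) *\<^sub>R (grad (\<lambda>z. ln (\<phi> z)) x - grad (\<lambda>z. ln (\<psi> z)) x)"
proof (rule euclidean_eqI)
  fix i :: 'a assume "i \<in> Basis"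
  have "(partial \<phi> i x * \<psi> x - \<phi> x * partial \<psi> i x) / (\<psi> x)\<^sup>2
      = \<phi> x / \<psi> x * (partial \<phi> i x / \<phi> x - partial \<psi> i x / \<psi> x)"
    using assms(3,4) by (simp add: field_simps power2_eq_square)
  then show "grad (\<lambda>z. \<phi> z / \<psi> z) x \<bullet> i
      = (\<phi> x / \<psi> x) *\<^sub>R (grad (\<lambda>z. ln (\<phi> z)) x - grad (\<lambda>z. ln (\<psi> z)) x) \<bullet> i"
    using \<open>i \<in> Basis\<close> assms
    by (simp add: inner_grad_Basis inner_diff_left partial_divide partial_ln)
qed

lemma lborel_integral_translate:
  fixes F :: "'a::euclidean_space \<Rightarrow> real"
  assumes "F \<in> borel_measurable borel"
  shows "(\<integral>z. F (z + c) \<partial>lborel) = (\<integral>z. F z \<partial>lborel)"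
proof -
  have "(\<integral>z. F z \<partial>lborel) = (\<integral>z. F z \<partial>distr lborel borel ((+) c))"
    by (simp add: lborel_distr_plus)
  also have "\<dots> = (\<integral>z. F (c + z) \<partial>lborel)"
    using assms by (intro integral_distr) auto
  finally show ?thesis by (simp add: add.commute)
qed

lemma lborel_integrable_translate:
  fixes F :: "'a::euclidean_space \<Rightarrow> real"
  assumes "F \<in> borel_measurable borel"
  shows "integrable lborel (\<lambda>z. F (z + c)) \<longleftrightarrow> integrable lborel F"
proof -
  have "integrable lborel F \<longleftrightarrow> integrable (distr lborel borel ((+) c)) F"
    by (simp add: lborel_distr_plus)
  also have "\<dots> \<longleftrightarrow> integrable lborel (\<lambda>z. F (c + z))"
    using assms by (intro integrable_distr_eq) auto
  finally show ?thesis by (simp add: add.commute)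
qed

lemma
  fixes d :: "'a::euclidean_space \<Rightarrow> real"
  assumes d: "integrable lborel d"
  shows AE_set_integrable_segment_translates:
      "AE z in lborel. set_integrable lborel {0..1} (\<lambda>s. d (z + s *\<^sub>R v))"
    and lborel_integral_segment_translates:
      "(\<integral>z. (LINT s:{0..1}|lborel. d (z + s *\<^sub>R v)) \<partial>lborel) = (\<integral>z. d z \<partial>lborel)"
proof -
  have [measurable]: "d \<in> borel_measurable borel"
    using borel_measurable_integrable[OF d] by simp
  define H where "H s z = indicator {0..1} s * d (z + s *\<^sub>R v)" for s :: real and z
  have translate: "(\<integral>z. H s z \<partial>lborel) = indicator {0..1} s * (\<integral>z. d z \<partial>lborel)"
    "(\<integral>z. norm (H s z) \<partial>lborel) = indicator {0..1} s * (\<integral>z. norm (d z) \<partial>lborel)" for s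
    using lborel_integral_translate[of d "s *\<^sub>R v"]
      lborel_integral_translate[of "\<lambda>z. norm (d z)" "s *\<^sub>R v"]
    by (simp_all add: H_def abs_mult)
  have H: "integrable (lborel \<Otimes>\<^sub>M lborel) (case_prod H)"
  proof (rule lborel_pair.Fubini_integrable)
    show "case_prod H \<in> borel_measurable (lborel \<Otimes>\<^sub>M lborel)"
      unfolding H_def by measurable
    show "integrable lborel (\<lambda>s. \<integral>z. norm (case_prod H (s, z)) \<partial>lborel)"
      using translate(2) by simp
    show "AE s in lborel. integrable lborel (\<lambda>z. case_prod H (s, z))"
      using lborel_integrable_translate[of d "s *\<^sub>R v" for s] d by (simp add: H_def)
  qed
  show "AE z in lborel. set_integrable lborel {0..1} (\<lambda>s. d (z + s *\<^sub>R v))"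
    using lborel_pair.AE_integrable_snd[OF H] by (simp add: H_def set_integrable_def)
  have "(\<integral>z. (LINT s:{0..1}|lborel. d (z + s *\<^sub>R v)) \<partial>lborel) = (\<integral>z. \<integral>s. H s z \<partial>lborel \<partial>lborel)"
    by (simp add: H_def set_lebesgue_integral_def)
  also have "\<dots> = (\<integral>s. \<integral>z. H s z \<partial>lborel \<partial>lborel)"
    by (rule lborel_pair.Fubini_integral[OF H])
  also have "\<dots> = (\<integral>z. d z \<partial>lborel)"
    by (simp add: translate)
  finally show "(\<integral>z. (LINT s:{0..1}|lborel. d (z + s *\<^sub>R v)) \<partial>lborel) = (\<integral>z. d z \<partial>lborel)" .
qed

lemma has_integral_partial_segment:
  fixes F :: "'a::euclidean_space \<Rightarrow> real"
  assumes dF: "\<And>x. F differentiable (at x)"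
  shows "((\<lambda>s. partial F v (z + s *\<^sub>R v)) has_integral F (z + v) - F z) {0..1}"
proof -
  have "((\<lambda>s. F (z + s *\<^sub>R v)) has_real_derivative partial F v (z + s *\<^sub>R v)) (at s)" for s
  proof -
    let ?x = "z + s *\<^sub>R v"
    have "((\<lambda>s. z + s *\<^sub>R v) has_derivative (\<lambda>h. h *\<^sub>R v)) (at s)"
      by (auto intro!: derivative_eq_intros)
    from has_derivative_compose[OF this has_derivative_frechet_derivative[OF dF]]
    have "((\<lambda>s. F (z + s *\<^sub>R v)) has_derivative (\<lambda>h. frechet_derivative F (at ?x) (h *\<^sub>R v))) (at s)"
      by simp
    moreover have "linear (frechet_derivative F (at ?x))"
      using has_derivative_frechet_derivative[OF dF] has_derivative_linear by blast
    then have "(\<lambda>h. frechet_derivative F (at ?x) (h *\<^sub>R v)) = (*) (partial F v ?x)"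
      by (auto simp: partial_def linear_scale)
    ultimately show ?thesis
      by (simp add: has_field_derivative_def)
  qed
  then have "((\<lambda>s. partial F v (z + s *\<^sub>R v)) has_integral F (z + 1 *\<^sub>R v) - F (z + 0 *\<^sub>R v)) {0..1}"
    by (intro fundamental_theorem_of_calculus)
       (auto simp: has_real_derivative_iff_has_vector_derivative[symmetric] intro: has_field_derivative_at_within)
  then show ?thesis by simp
qed

(* The fundamental theorem of calculus on each segment [z, z + v], averaged over z by Fubini,
   gives \<integral> \<partial>\<^sub>v F = \<integral> F(z + v) - F(z), which vanishes by translation invariance of lborel. *)
lemma lborel_integral_partial_eq_0:
  fixes F :: "'a::euclidean_space \<Rightarrow> real"
  assumes dF: "\<And>x. F differentiable (at x)"
    and F: "integrable lborel F" and dv: "integrable lborel (partial F v)"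
  shows "(\<integral>z. partial F v z \<partial>lborel) = 0"
proof -
  have [measurable]: "F \<in> borel_measurable borel" "partial F v \<in> borel_measurable borel"
    using borel_measurable_integrable[OF F] borel_measurable_integrable[OF dv] by simp_all
  have "(\<integral>z. partial F v z \<partial>lborel)
      = (\<integral>z. (LINT s:{0..1}|lborel. partial F v (z + s *\<^sub>R v)) \<partial>lborel)"
    by (rule lborel_integral_segment_translates[OF dv, symmetric])
  also have "\<dots> = (\<integral>z. F (z + v) - F z \<partial>lborel)"
  proof (rule integral_cong_AE)
    show "AE z in lborel. (LINT s:{0..1}|lborel. partial F v (z + s *\<^sub>R v)) = F (z + v) - F z"
      using AE_set_integrable_segment_translates[OF dv, of v]
    proof eventually_elim
      case (elim z)
      then have "(LINT s:{0..1}|lborel. partial F v (z + s *\<^sub>R v))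
          = integral {0..1} (\<lambda>s. partial F v (z + s *\<^sub>R v))"
        by (rule set_borel_integral_eq_integral(2))
      also have "\<dots> = F (z + v) - F z"
        using has_integral_partial_segment[OF dF] by (rule integral_unique)
      finally show ?case .
    qed
  qed (simp_all add: set_lebesgue_integral_def)
  also have "\<dots> = (\<integral>z. F (z + v) \<partial>lborel) - (\<integral>z. F z \<partial>lborel)"
    using lborel_integrable_translate[of F v] F by (intro Bochner_Integration.integral_diff) auto
  also have "\<dots> = 0"
    by (simp add: lborel_integral_translate)
  finally show ?thesis .
qed

lemma
  fixes \<phi> :: "'a::euclidean_space \<Rightarrow> real" and J :: "'a \<Rightarrow> 'a"
  assumes d\<phi>: "\<And>x. \<phi> differentiable (at x)"
    and dJ: "\<And>x i. i \<in> Basis \<Longrightarrow> (\<lambda>y. J y \<bullet> i) differentiable (at x)"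
    and integrable_product: "\<And>i. i \<in> Basis \<Longrightarrow> integrable lborel (\<lambda>z. \<phi> z * (J z \<bullet> i))"
    and integrable_partial_product:
      "\<And>i. i \<in> Basis \<Longrightarrow> integrable lborel (partial (\<lambda>z. \<phi> z * (J z \<bullet> i)) i)"
    and integrable_flux_partial:
      "\<And>i. i \<in> Basis \<Longrightarrow> integrable lborel (\<lambda>z. (J z \<bullet> i) * partial \<phi> i z)"
  shows integrable_mult_divg: "integrable lborel (\<lambda>z. \<phi> z * divg J z)"
    and integrable_inner_grad: "integrable lborel (\<lambda>z. J z \<bullet> grad \<phi> z)"
    and integral_mult_divg: "(\<integral>z. \<phi> z * divg J z \<partial>lborel) = - (\<integral>z. J z \<bullet> grad \<phi> z \<partial>lborel)"
proof -
  define P where "P i = partial (\<lambda>z. \<phi> z * (J z \<bullet> i)) i" for i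
  define R where "R i z = (J z \<bullet> i) * partial \<phi> i z" for i z
  have divg_eq: "\<phi> z * divg J z = (\<Sum>i\<in>Basis. P i z - R i z)" for z
    using partial_mult[OF d\<phi> dJ]
    by (simp add: divg_def P_def R_def sum_distrib_left sum_subtractf algebra_simps)
  have grad_eq: "J z \<bullet> grad \<phi> z = (\<Sum>i\<in>Basis. R i z)" for z
    by (simp add: inner_grad R_def)
  have P: "integrable lborel (P i)" "(\<integral>z. P i z \<partial>lborel) = 0" if "i \<in> Basis" for i
    using lborel_integral_partial_eq_0[OF differentiable_mult[OF d\<phi> dJ[OF that]]]
      integrable_product[OF that] integrable_partial_product[OF that]
    by (simp_all add: P_def)
  have R: "integrable lborel (R i)" if "i \<in> Basis" for i
    using integrable_flux_partial[OF that] by (simp add: R_def[abs_def])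
  show "integrable lborel (\<lambda>z. \<phi> z * divg J z)"
    unfolding divg_eq using P R by auto
  show "integrable lborel (\<lambda>z. J z \<bullet> grad \<phi> z)"
    unfolding grad_eq using R by auto
  have "(\<integral>z. \<phi> z * divg J z \<partial>lborel) = (\<Sum>i\<in>Basis. (\<integral>z. P i z \<partial>lborel) - (\<integral>z. R i z \<partial>lborel))"
    unfolding divg_eq using P R by (simp add: Bochner_Integration.integral_sum Bochner_Integration.integral_diff)
  also have "\<dots> = - (\<integral>z. J z \<bullet> grad \<phi> z \<partial>lborel)"
    unfolding grad_eq using P R by (simp add: Bochner_Integration.integral_sum sum_negf)
  finally show "(\<integral>z. \<phi> z * divg J z \<partial>lborel) = - (\<integral>z. J z \<bullet> grad \<phi> z \<partial>lborel)" .
qed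

(* For a = \<nabla>log u, b = \<nabla>log w, x = u, y = w and drift v, the left side is the integrand
   -J\<^sub>u \<bullet> \<nabla>log w - J\<^sub>w \<bullet> \<nabla>(u/w) left after integrating by parts. *)
lemma inner_flux_identity:
  fixes a b v :: "'a::real_inner"
  assumes "y \<noteq> 0"
  shows "- ((x *\<^sub>R ((\<sigma>\<^sup>2 / 2) *\<^sub>R a - v)) \<bullet> b) - (y *\<^sub>R ((\<sigma>\<^sup>2 / 2) *\<^sub>R b - v)) \<bullet> ((x / y) *\<^sub>R (a - b))
         = x * (\<sigma>\<^sup>2 / 2 * (b \<bullet> b) + v \<bullet> a - \<sigma>\<^sup>2 * (a \<bullet> b))"
  using assms by (simp add: inner_diff_left inner_diff_right inner_commute[of b a] algebra_simps)

lemma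
  fixes u w :: "'a::euclidean_space \<Rightarrow> real" and F :: "'a \<Rightarrow> 'a" and \<sigma> :: real
  defines "Ju \<equiv> \<lambda>z. u z *\<^sub>R ((\<sigma>\<^sup>2 / 2) *\<^sub>R grad (\<lambda>y. ln (u y)) z - F z)"
    and "Jw \<equiv> \<lambda>z. w z *\<^sub>R ((\<sigma>\<^sup>2 / 2) *\<^sub>R grad (\<lambda>y. ln (w y)) z - F z)"
  assumes dF: "\<And>x. F differentiable (at x)"
    and u_pos: "\<And>x. u x > 0" and w_pos: "\<And>x. w x > 0"
    and du: "\<And>x. u differentiable (at x)" and dw: "\<And>x. w differentiable (at x)"
    and d_grad_u: "\<And>x. (\<lambda>y. grad (\<lambda>z. ln (u z)) y) differentiable (at x)"
    and d_grad_w: "\<And>x. (\<lambda>y. grad (\<lambda>z. ln (w z)) y) differentiable (at x)"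
    and integrable_u: "\<And>i. i \<in> Basis \<Longrightarrow>
           integrable lborel (\<lambda>z. ln (w z) * (Ju z \<bullet> i))
         \<and> integrable lborel (partial (\<lambda>z. ln (w z) * (Ju z \<bullet> i)) i)
         \<and> integrable lborel (\<lambda>z. (Ju z \<bullet> i) * partial (\<lambda>y. ln (w y)) i z)"
    and integrable_w: "\<And>i. i \<in> Basis \<Longrightarrow>
           integrable lborel (\<lambda>z. u z / w z * (Jw z \<bullet> i))
         \<and> integrable lborel (partial (\<lambda>z. u z / w z * (Jw z \<bullet> i)) i)
         \<and> integrable lborel (\<lambda>z. partial (\<lambda>y. u y / w y) i z * (Jw z \<bullet> i))"
  shows integrable_cross_entropy_rate:
      "integrable lborel (\<lambda>z. divg Ju z * ln (w z) + u z * divg Jw z / w z)"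
    and integral_cross_entropy_rate:
      "(\<integral>z. divg Ju z * ln (w z) + u z * divg Jw z / w z \<partial>lborel)
         = expect_dens u (\<lambda>z. \<sigma>\<^sup>2 / 2 * (norm (grad (\<lambda>y. ln (w y)) z))\<^sup>2
                                + F z \<bullet> grad (\<lambda>y. ln (u y)) z
                                - \<sigma>\<^sup>2 * (grad (\<lambda>y. ln (u y)) z \<bullet> grad (\<lambda>y. ln (w y)) z))"
proof -
  have d_ln_w: "(\<lambda>y. ln (w y)) differentiable (at x)" for x
    using has_derivative_ln[OF w_pos has_derivative_frechet_derivative[OF dw]]
    unfolding differentiable_def by blast
  have d_ratio: "(\<lambda>y. u y / w y) differentiable (at x)" for x
    using du dw w_pos[of x] by (intro differentiable_divide) auto
  have dJu: "(\<lambda>y. Ju y \<bullet> i) differentiable (at x)" for x i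
    unfolding Ju_def using du d_grad_u dF by simp
  have dJw: "(\<lambda>y. Jw y \<bullet> i) differentiable (at x)" for x i
    unfolding Jw_def using dw d_grad_w dF by simp
  have integrable_w': "integrable lborel (\<lambda>z. (Jw z \<bullet> i) * partial (\<lambda>y. u y / w y) i z)"
    if "i \<in> Basis" for i
    using integrable_w[OF that] by (simp add: mult.commute)
  note green_u = integrable_mult_divg[OF d_ln_w dJu] integrable_inner_grad[OF d_ln_w dJu]
    integral_mult_divg[OF d_ln_w dJu]
  note green_w = integrable_mult_divg[OF d_ratio dJw] integrable_inner_grad[OF d_ratio dJw]
    integral_mult_divg[OF d_ratio dJw]
  have rearranged: "divg Ju z * ln (w z) + u z * divg Jw z / w z
      = ln (w z) * divg Ju z + u z / w z * divg Jw z" for z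
    by simp
  have flux_identity: "- (Ju z \<bullet> grad (\<lambda>y. ln (w y)) z) - Jw z \<bullet> grad (\<lambda>y. u y / w y) z
      = u z * (\<sigma>\<^sup>2 / 2 * (norm (grad (\<lambda>y. ln (w y)) z))\<^sup>2
               + F z \<bullet> grad (\<lambda>y. ln (u y)) z
               - \<sigma>\<^sup>2 * (grad (\<lambda>y. ln (u y)) z \<bullet> grad (\<lambda>y. ln (w y)) z))" for z
    unfolding Ju_def Jw_def grad_divide[OF du dw u_pos w_pos] power2_norm_eq_inner
    using w_pos[of z] by (intro inner_flux_identity) simp
  show "integrable lborel (\<lambda>z. divg Ju z * ln (w z) + u z * divg Jw z / w z)"
    unfolding rearranged using green_u(1) green_w(1) integrable_u integrable_w integrable_w' by auto
  have "(\<integral>z. divg Ju z * ln (w z) + u z * divg Jw z / w z \<partial>lborel)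
      = - (\<integral>z. Ju z \<bullet> grad (\<lambda>y. ln (w y)) z \<partial>lborel) - (\<integral>z. Jw z \<bullet> grad (\<lambda>y. u y / w y) z \<partial>lborel)"
    unfolding rearranged using green_u green_w integrable_u integrable_w integrable_w'
    by (subst Bochner_Integration.integral_add) auto
  also have "\<dots> = (\<integral>z. - (Ju z \<bullet> grad (\<lambda>y. ln (w y)) z) - Jw z \<bullet> grad (\<lambda>y. u y / w y) z \<partial>lborel)"
    using green_u green_w integrable_u integrable_w integrable_w' by auto
  finally show "(\<integral>z. divg Ju z * ln (w z) + u z * divg Jw z / w z \<partial>lborel)
         = expect_dens u (\<lambda>z. \<sigma>\<^sup>2 / 2 * (norm (grad (\<lambda>y. ln (w y)) z))\<^sup>2
                                + F z \<bullet> grad (\<lambda>y. ln (u y)) z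
                                - \<sigma>\<^sup>2 * (grad (\<lambda>y. ln (u y)) z \<bullet> grad (\<lambda>y. ln (w y)) z))"
    by (simp add: expect_dens_def flux_identity)
qed

lemma has_real_derivative_lborel_integral:
  fixes \<phi> \<phi>' :: "'a::euclidean_space \<Rightarrow> real \<Rightarrow> real" and h :: "'a \<Rightarrow> real"
  assumes S: "convex S" and t: "t \<in> S"
    and deriv: "\<And>s z. s \<in> S \<Longrightarrow> ((\<lambda>s. \<phi> z s) has_real_derivative \<phi>' z s) (at s within S)"
    and integrable: "\<And>s. s \<in> S \<Longrightarrow> integrable lborel (\<lambda>z. \<phi> z s)"
    and measurable: "(\<lambda>z. \<phi>' z t) \<in> borel_measurable lborel"
    and dominated: "integrable lborel h" "\<And>s z. s \<in> S \<Longrightarrow> \<bar>\<phi>' z s\<bar> \<le> h z"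
  shows "((\<lambda>s. \<integral>z. \<phi> z s \<partial>lborel) has_real_derivative (\<integral>z. \<phi>' z t \<partial>lborel)) (at t within S)"
proof -
  have "((\<lambda>s. ((\<integral>z. \<phi> z s \<partial>lborel) - (\<integral>z. \<phi> z t \<partial>lborel)) / (s - t))
          \<longlongrightarrow> (\<integral>z. \<phi>' z t \<partial>lborel)) (at t within S)"
  proof (rule Lim_within_LIMSEQ, safe)
    fix X :: "nat \<Rightarrow> real" assume X: "\<forall>n. X n \<noteq> t \<and> X n \<in> S" "X \<longlonglongrightarrow> t"
    define Q where "Q n z = (\<phi> z (X n) - \<phi> z t) / (X n - t)" for n z
    have "(\<lambda>n. \<integral>z. Q n z \<partial>lborel) \<longlonglongrightarrow> (\<integral>z. \<phi>' z t \<partial>lborel)"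
    proof (rule integral_dominated_convergence[OF measurable _ dominated(1)])
      show "Q n \<in> borel_measurable lborel" for n
      proof -
        have "(\<lambda>z. \<phi> z (X n)) \<in> borel_measurable lborel" "(\<lambda>z. \<phi> z t) \<in> borel_measurable lborel"
          using integrable X(1) t by (auto intro: borel_measurable_integrable)
        then show ?thesis unfolding Q_def[abs_def] by measurable
      qed
      show "AE z in lborel. (\<lambda>n. Q n z) \<longlonglongrightarrow> \<phi>' z t"
      proof (rule AE_I2)
        fix z
        have "((\<lambda>s. (\<phi> z s - \<phi> z t) / (s - t)) \<longlongrightarrow> \<phi>' z t) (at t within S)"
          using deriv[OF t] by (simp add: has_field_derivative_iff)
        moreover have "filterlim X (at t within S) sequentially"
          using X by (auto simp: filterlim_at)
        ultimately show "(\<lambda>n. Q n z) \<longlonglongrightarrow> \<phi>' z t"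
          unfolding Q_def by (rule filterlim_compose)
      qed
      show "AE z in lborel. norm (Q n z) \<le> h z" for n
      proof (rule AE_I2)
        fix z
        have "\<bar>\<phi> z (X n) - \<phi> z t\<bar> \<le> h z * \<bar>X n - t\<bar>"
          using field_differentiable_bound[OF S, of "\<phi> z" "\<phi>' z" "h z" "X n" t] deriv dominated(2) X(1) t
          by simp
        then show "norm (Q n z) \<le> h z"
          using X(1) by (simp add: Q_def abs_divide divide_le_eq)
      qed
    qed
    moreover have "(\<integral>z. Q n z \<partial>lborel)
        = ((\<integral>z. \<phi> z (X n) \<partial>lborel) - (\<integral>z. \<phi> z t \<partial>lborel)) / (X n - t)" for n
      using integrable X(1) t unfolding Q_def by (simp add: Bochner_Integration.integral_diff)
    ultimately show "(\<lambda>n. ((\<integral>z. \<phi> z (X n) \<partial>lborel) - (\<integral>z. \<phi> z t \<partial>lborel)) / (X n - t))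
        \<longlonglongrightarrow> (\<integral>z. \<phi>' z t \<partial>lborel)"
      by simp
  qed
  then show ?thesis by (simp add: has_field_derivative_iff)
qed

lemma DERIV_mult_ln:
  fixes a b :: "real \<Rightarrow> real"
  assumes "(a has_real_derivative a') (at t within S)" "(b has_real_derivative b') (at t within S)"
    and "b t > 0"
  shows "((\<lambda>s. a s * ln (b s)) has_real_derivative a' * ln (b t) + a t * b' / b t) (at t within S)"
proof -
  have "((\<lambda>s. ln (b s)) has_real_derivative 1 / b t * b') (at t within S)"
    using assms(2,3) by (intro DERIV_chain2[OF DERIV_ln_divide])
  from DERIV_mult[OF assms(1) this] show ?thesis
    by (rule DERIV_cong) simp
qed

theorem mainTheorem2:
  fixes f :: "'a::euclidean_space \<Rightarrow> real \<Rightarrow> 'a" and g :: "real \<Rightarrow> real"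
    and q p :: "'a \<Rightarrow> real \<Rightarrow> real"
  assumes f_reg: "\<forall>t\<in>{0..1}. \<forall>z. (\<lambda>y. f y t) differentiable (at z)"
    and g_reg: "continuous_on {0..1} g"
    and q_pos: "\<forall>t\<in>{0..1}. \<forall>z. q z t > 0"
    and p_pos: "\<forall>t\<in>{0..1}. \<forall>z. p z t > 0"
    and q_dens: "\<forall>t\<in>{0..1}. integrable lborel (\<lambda>z. q z t) \<and> (\<integral>z. q z t \<partial>lborel) = 1"
    and p_dens: "\<forall>t\<in>{0..1}. integrable lborel (\<lambda>z. p z t) \<and> (\<integral>z. p z t \<partial>lborel) = 1"
    and q_reg: "\<forall>t\<in>{0..1}. \<forall>z. (\<lambda>y. q y t) differentiable (at z)
                  \<and> (\<lambda>y. grad (\<lambda>x. ln (q x t)) y) differentiable (at z)"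
    and p_reg: "\<forall>t\<in>{0..1}. \<forall>z. (\<lambda>y. p y t) differentiable (at z)
                  \<and> (\<lambda>y. grad (\<lambda>x. ln (p x t)) y) differentiable (at z)"
    and q_FP: "\<forall>t\<in>{0..1}. \<forall>z.
                 ((\<lambda>s. q z s) has_real_derivative divg (\<lambda>y. fp_flux g f q y t) z) (at t within {0..1})"
    and p_FP: "\<forall>t\<in>{0..1}. \<forall>z.
                 ((\<lambda>s. p z s) has_real_derivative divg (\<lambda>y. fp_flux g f p y t) z) (at t within {0..1})"
    and terminal: "\<forall>z. q z 1 = p z 1"
    \<comment> \<open>decay: the cross-entropy integrals exist\<close>
    and cross_int: "\<forall>t\<in>{0..1}. integrable lborel (\<lambda>z. q z t * ln (p z t))"
    \<comment> \<open>decay for differentiation under the integral sign in t (integrable dominating function)\<close>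
    and duis: "\<exists>h. integrable lborel h \<and> (\<forall>t\<in>{0..1}. \<forall>z.
                 \<bar>divg (\<lambda>y. fp_flux g f q y t) z * ln (p z t)
                   + q z t * divg (\<lambda>y. fp_flux g f p y t) z / p z t\<bar> \<le> h z)"
    \<comment> \<open>decay for integration by parts with vanishing boundary terms\<close>
    and ibp1: "\<forall>t\<in>{0..1}. \<forall>i\<in>Basis.
                 integrable lborel (\<lambda>z. ln (p z t) * (fp_flux g f q z t \<bullet> i))
               \<and> integrable lborel (partial (\<lambda>z. ln (p z t) * (fp_flux g f q z t \<bullet> i)) i)
               \<and> integrable lborel (\<lambda>z. (fp_flux g f q z t \<bullet> i) * partial (\<lambda>y. ln (p y t)) i z)"
    and ibp2: "\<forall>t\<in>{0..1}. \<forall>i\<in>Basis.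
                 integrable lborel (\<lambda>z. q z t / p z t * (fp_flux g f p z t \<bullet> i))
               \<and> integrable lborel (partial (\<lambda>z. q z t / p z t * (fp_flux g f p z t \<bullet> i)) i)
               \<and> integrable lborel (\<lambda>z. partial (\<lambda>y. q y t / p y t) i z * (fp_flux g f p z t \<bullet> i))"
  shows "- (\<integral>z. q z 0 * ln (p z 0) \<partial>lborel)
           = diff_entropy (\<lambda>z. q z 1)
             + integral {0..1} (\<lambda>t. expect_dens (\<lambda>z. q z t) (\<lambda>z.
                   (g t)^2 / 2 * (norm (grad (\<lambda>y. ln (p y t)) z))^2
                 + f z t \<bullet> grad (\<lambda>y. ln (q y t)) z
                 - (g t)^2 * (grad (\<lambda>y. ln (q y t)) z \<bullet> grad (\<lambda>y. ln (p y t)) z)))"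
proof -
  define D where "D z t = divg (\<lambda>y. fp_flux g f q y t) z * ln (p z t)
                          + q z t * divg (\<lambda>y. fp_flux g f p y t) z / p z t" for z t
  define E where "E t = expect_dens (\<lambda>z. q z t) (\<lambda>z.
                   (g t)^2 / 2 * (norm (grad (\<lambda>y. ln (p y t)) z))^2
                 + f z t \<bullet> grad (\<lambda>y. ln (q y t)) z
                 - (g t)^2 * (grad (\<lambda>y. ln (q y t)) z \<bullet> grad (\<lambda>y. ln (p y t)) z))" for t
  define CE where "CE t = (\<integral>z. q z t * ln (p z t) \<partial>lborel)" for t
  have rate: "integrable lborel (\<lambda>z. D z t) \<and> (\<integral>z. D z t \<partial>lborel) = E t" if "t \<in> {0..1}" for t
  proof -
    note hyps = f_reg[rule_format, OF that] q_pos[rule_format, OF that] p_pos[rule_format, OF that]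
      q_reg[rule_format, OF that, THEN conjunct1] p_reg[rule_format, OF that, THEN conjunct1]
      q_reg[rule_format, OF that, THEN conjunct2] p_reg[rule_format, OF that, THEN conjunct2]
      ibp1[unfolded fp_flux_def, rule_format, OF that] ibp2[unfolded fp_flux_def, rule_format, OF that]
    show ?thesis
      unfolding D_def E_def fp_flux_def
      using integrable_cross_entropy_rate[OF hyps] integral_cross_entropy_rate[OF hyps] by simp
  qed
  have deriv: "((\<lambda>s. q z s * ln (p z s)) has_real_derivative D z t) (at t within {0..1})"
    if "t \<in> {0..1}" for z t
    using q_FP p_FP p_pos that unfolding D_def by (intro DERIV_mult_ln) auto
  obtain h where h: "integrable lborel h" "\<And>t z. t \<in> {0..1} \<Longrightarrow> \<bar>D z t\<bar> \<le> h z"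
    using duis unfolding D_def by blast
  have CE_deriv: "(CE has_real_derivative (\<integral>z. D z t \<partial>lborel)) (at t within {0..1})"
    if "t \<in> {0..1}" for t
    unfolding CE_def using rate[OF that] cross_int
    by (intro has_real_derivative_lborel_integral[OF _ that deriv _ _ h])
       (auto intro: borel_measurable_integrable)
  have "((\<lambda>t. \<integral>z. D z t \<partial>lborel) has_integral CE 1 - CE 0) {0..1}"
    by (rule fundamental_theorem_of_calculus)
       (auto simp: has_real_derivative_iff_has_vector_derivative[symmetric] intro!: CE_deriv)
  then have "(E has_integral CE 1 - CE 0) {0..1}"
    by (rule has_integral_eq[rotated]) (use rate in auto)
  then have "integral {0..1} E = CE 1 - CE 0"
    by (rule integral_unique)
  then show ?thesis
    using terminal by (simp add: E_def[abs_def] CE_def diff_entropy_def)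
qed

end
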